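(* Let $n\ge1$, $A=\begin{bmatrix}1&2\\0&1\end{bmatrix}$, $B=\begin{bmatrix}1&0\\2&1\end{bmatrix}$, $\Gamma(2)$ the principal congruence subgroup of level $2$ (generated in $\mathrm{PSL}_2(\mathbb{Z})$ by $A,B$), and $\Phi(n)=\langle A^n,B^n,\Gamma(2)'\rangle$ where $\Gamma(2)'$ is the commutator subgroup of $\Gamma(2)$. Let $\pi:\bar{\mathfrak{H}}\to\bar{\mathfrak{H}}/\Phi(n)=X_{\Phi(n)}$ be the quotient map, where $\bar{\mathfrak{H}}=\mathfrak{H}\cup\mathbb{P}^1(\mathbb{Q})$ with $\mathrm{SL}_2(\mathbb{Z})$ acting by fractional linear transformations. Then: (1) the actions of $A$ and $B$ on $X_{\Phi(n)}$ commute; (2) $\pi(A^k\cdot 1)=\pi(B^k\cdot 1)$ for every $k\in\mathbb{Z}$.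
   Context: Since $\Phi(n)$ contains the commutator subgroup of $\Gamma(2)$, it is normal in $\Gamma(2)$, so $\Gamma(2)$ acts on $X_{\Phi(n)}$ via $\pi(z)\mapsto\pi(g z)$. Here $1\in\mathbb{P}^1(\mathbb{Q})\subset\bar{\mathfrak{H}}$. *)

theory Defs
  imports Complex_Main "HOL-Algebra.Generated_Groups"
begin

text \<open>Integer 2x2 matrices [[a,b],[c,d]] represented as tuples (a,b,c,d).\<close>
type_synonym mat2 = "int \<times> int \<times> int \<times> int"

fun mat2_mult :: "mat2 \<Rightarrow> mat2 \<Rightarrow> mat2" where
  "mat2_mult (a,b,c,d) (a',b',c',d') =
     (a*a' + b*c', a*b' + b*d', c*a' + d*c', c*b' + d*d')"

fun mat2_det :: "mat2 \<Rightarrow> int" where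
  "mat2_det (a,b,c,d) = a*d - b*c"

text \<open>The group SL_2(Z).  PSL_2(Z) is handled by working with preimages in SL_2(Z):
  every subgroup of PSL_2(Z) below is represented by its preimage, which contains -I.\<close>
definition SL2Z :: "mat2 monoid" where
  "SL2Z = \<lparr> carrier = {M. mat2_det M = 1}, mult = mat2_mult, one = (1,0,0,1) \<rparr>"

definition matA :: mat2 where "matA = (1,2,0,1)"
definition matB :: mat2 where "matB = (1,0,2,1)"
definition negI :: mat2 where "negI = (-1,0,0,-1)"

definition Gamma2 :: "mat2 set" where
  "Gamma2 = generate SL2Z {matA, matB, negI}"

definition Phi :: "nat \<Rightarrow> mat2 set" where
  "Phi n = generate SL2Z ({matA [^]\<^bsub>SL2Z\<^esub> n, matB [^]\<^bsub>SL2Z\<^esub> n, negI} \<union> derived SL2Z Gamma2)"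

datatype hpoint = Hpt complex | Cusp rat | Infty

definition Hbar :: "hpoint set" where
  "Hbar = {Hpt z | z. Im z > 0} \<union> range Cusp \<union> {Infty}"

fun mact :: "mat2 \<Rightarrow> hpoint \<Rightarrow> hpoint" where
  "mact (a,b,c,d) (Hpt z) = Hpt ((of_int a * z + of_int b) / (of_int c * z + of_int d))"
| "mact (a,b,c,d) (Cusp q) =
     (if of_int c * q + of_int d = 0 then Infty
      else Cusp ((of_int a * q + of_int b) / (of_int c * q + of_int d)))"
| "mact (a,b,c,d) Infty = (if c = 0 then Infty else Cusp (of_int a / of_int c))"

definition piPhi :: "nat \<Rightarrow> hpoint \<Rightarrow> hpoint set" where
  "piPhi n z = {w. \<exists>g \<in> Phi n. w = mact g z}"

end

theory Submission
  imports Defs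
begin

text \<open>Since \<open>\<Phi>(n)\<close> contains the commutator subgroup of \<open>\<Gamma>(2)\<close>, it is normalised by \<open>\<Gamma>(2)\<close>
  and any two elements of \<open>\<Gamma>(2)\<close> commute modulo \<open>\<Phi>(n)\<close>; hence \<open>\<Gamma>(2)\<close> acts on the
  \<open>\<Phi>(n)\<close>-orbits through an abelian group, which is (1). For (2) note that \<open>A\<^sup>-\<^sup>1\<close> and \<open>B\<^sup>-\<^sup>1\<close>
  both send the cusp \<open>1\<close> to \<open>-1\<close>. Then \<open>A\<cdot>1 = AB\<cdot>(A\<^sup>-\<^sup>1\<cdot>1)\<close> lies in the orbit of \<open>BA\<cdot>(A\<^sup>-\<^sup>1\<cdot>1) = B\<cdot>1\<close>,
  and induction on \<open>k\<close> in both directions, commuting a factor \<open>A\<^sup>\<plusminus>\<^sup>1\<close> past \<open>B\<^sup>k\<close> at each step,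
  gives \<open>\<pi>(A\<^sup>k\<cdot>1) = \<pi>(B\<^sup>k\<cdot>1)\<close>.\<close>

lemma mat2_det_mult: "mat2_det (mat2_mult M N) = mat2_det M * mat2_det N"
  by (cases M; cases N) (simp add: algebra_simps)

lemma SL2Z_simps:
  "carrier SL2Z = {M. mat2_det M = 1}" "\<one>\<^bsub>SL2Z\<^esub> = (1,0,0,1)" "M \<otimes>\<^bsub>SL2Z\<^esub> N = mat2_mult M N"
  by (simp_all add: SL2Z_def)

lemma group_SL2Z: "group SL2Z"
proof (rule groupI)
  fix M assume "M \<in> carrier SL2Z"
  moreover obtain a b c d where "M = (a,b,c,d)" by (cases M)
  ultimately have "(d,-b,-c,a) \<in> carrier SL2Z \<and> (d,-b,-c,a) \<otimes>\<^bsub>SL2Z\<^esub> M = \<one>\<^bsub>SL2Z\<^esub>"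
    by (auto simp: SL2Z_simps algebra_simps)
  then show "\<exists>N\<in>carrier SL2Z. N \<otimes>\<^bsub>SL2Z\<^esub> M = \<one>\<^bsub>SL2Z\<^esub>" by blast
next
  fix L M N :: mat2
  show "L \<otimes>\<^bsub>SL2Z\<^esub> M \<otimes>\<^bsub>SL2Z\<^esub> N = L \<otimes>\<^bsub>SL2Z\<^esub> (M \<otimes>\<^bsub>SL2Z\<^esub> N)"
    by (cases L; cases M; cases N) (simp add: SL2Z_simps algebra_simps)
  show "\<one>\<^bsub>SL2Z\<^esub> \<otimes>\<^bsub>SL2Z\<^esub> M = M"
    by (cases M) (simp add: SL2Z_simps)
qed (auto simp: SL2Z_simps mat2_det_mult)

interpretation SL2Z: group SL2Z
  by (rule group_SL2Z)

lemma SL2Z_inv: "mat2_det (a,b,c,d) = 1 \<Longrightarrow> inv\<^bsub>SL2Z\<^esub> (a,b,c,d) = (d,-b,-c,a)"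
  by (rule SL2Z.inv_equality) (auto simp: SL2Z_simps algebra_simps)

lemma (in group) commutator_mult_swap:
  assumes "x \<in> carrier G" "y \<in> carrier G"
  shows "x \<otimes> y \<otimes> inv x \<otimes> inv y \<otimes> (y \<otimes> x) = x \<otimes> y"
proof -
  have "inv y \<otimes> (y \<otimes> x) = x"
    using assms by (simp add: m_assoc[symmetric])
  then show ?thesis
    using assms by (simp add: m_assoc)
qed

lemma Hpt_denominator_nonzero:
  assumes "a*d - b*c = (1::int)" "Im z > 0"
  shows "of_int c * z + of_int d \<noteq> 0"
proof
  assume "of_int c * z + of_int d = 0"
  then have "c = 0" and "d = 0"
    using assms(2) by (auto simp: complex_eq_iff)
  with assms(1) show False by simp
qed

lemma mact_in_Hbar:
  assumes "M \<in> carrier SL2Z" "z \<in> Hbar"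
  shows "mact M z \<in> Hbar"
proof -
  obtain a b c d where M: "M = (a,b,c,d)" by (cases M)
  show ?thesis
  proof (cases z)
    case (Hpt w)
    with assms M have w: "Im w > 0" and det: "a*d - b*c = 1" by (auto simp: Hbar_def SL2Z_simps)
    have "Im ((of_int a * w + of_int b) / (of_int c * w + of_int d))
        = Im w * of_int (a*d - b*c) / (cmod (of_int c * w + of_int d))\<^sup>2"
      by (simp add: Im_divide cmod_power2 algebra_simps)
    also have "\<dots> > 0"
      using w det Hpt_denominator_nonzero[OF det w] by simp
    finally show ?thesis using Hpt M by (auto simp: Hbar_def)
  qed (auto simp: Hbar_def M)
qed

lemma moebius_of_quotient:
  fixes a b c d p q :: "'a::field"
  assumes "q \<noteq> 0"
  shows "(a*(p/q) + b) / (c*(p/q) + d) = (a*p + b*q) / (c*p + d*q)"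
proof -
  have "a*(p/q) + b = (a*p + b*q)/q" "c*(p/q) + d = (c*p + d*q)/q"
    using assms by (simp_all add: field_simps)
  then show ?thesis using assms by simp
qed

lemma mact_mult_Hpt:
  assumes "mat2_det N = 1" "Im w > 0"
  shows "mact (mat2_mult M N) (Hpt w) = mact M (mact N (Hpt w))"
proof -
  obtain a b c d where M: "M = (a,b,c,d)" by (cases M)
  obtain a' b' c' d' where N: "N = (a',b',c',d')" by (cases N)
  have "of_int c' * w + of_int d' \<noteq> 0"
    using assms N Hpt_denominator_nonzero by simp
  then show ?thesis
    unfolding M N mat2_mult.simps mact.simps
    by (subst moebius_of_quotient) (simp_all add: algebra_simps)
qed

text \<open>Cusps in homogeneous coordinates: \<open>(x, y) \<noteq> 0\<close> stands for \<open>x/y\<close>, with \<open>y = 0\<close> giving \<open>\<infinity>\<close>.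
  On these coordinates the action is linear, which makes it compatible with matrix products.\<close>

definition cusp_of :: "rat \<times> rat \<Rightarrow> hpoint" where
  "cusp_of v = (if snd v = 0 then Infty else Cusp (fst v / snd v))"

fun mat2_vec :: "mat2 \<Rightarrow> rat \<times> rat \<Rightarrow> rat \<times> rat" where
  "mat2_vec (a,b,c,d) (x,y) = (of_int a * x + of_int b * y, of_int c * x + of_int d * y)"

lemma mat2_vec_mult: "mat2_vec (mat2_mult M N) v = mat2_vec M (mat2_vec N v)"
  by (cases M; cases N; cases v) (simp add: algebra_simps)

lemma mat2_vec_nonzero:
  assumes "mat2_det M \<noteq> 0" "v \<noteq> (0,0)"
  shows "mat2_vec M v \<noteq> (0,0)"
proof
  obtain a b c d where M: "M = (a,b,c,d)" by (cases M)
  obtain x y where v: "v = (x,y)" by (cases v)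
  assume "mat2_vec M v = (0,0)"
  then have "of_int a * x + of_int b * y = 0" "of_int c * x + of_int d * y = 0"
    by (simp_all add: M v)
  moreover have
    "of_int (mat2_det M) * x = of_int d * (of_int a * x + of_int b * y) - of_int b * (of_int c * x + of_int d * y)"
    "of_int (mat2_det M) * y = of_int a * (of_int c * x + of_int d * y) - of_int c * (of_int a * x + of_int b * y)"
    by (simp_all add: M algebra_simps)
  ultimately show False using assms by (simp add: v)
qed

lemma mact_cusp_of:
  assumes "v \<noteq> (0,0)"
  shows "mact M (cusp_of v) = cusp_of (mat2_vec M v)"
proof -
  obtain a b c d where M: "M = (a,b,c,d)" by (cases M)
  obtain x y where v: "v = (x,y)" by (cases v)
  show ?thesis
  proof (cases "y = 0")
    case True
    with assms v have "x \<noteq> 0" by simp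
    with True show ?thesis by (simp add: M v cusp_of_def)
  next
    case False
    have "of_int c * (x/y) + of_int d = (of_int c * x + of_int d * y) / y"
      "of_int a * (x/y) + of_int b = (of_int a * x + of_int b * y) / y"
      using False by (simp_all add: field_simps)
    with False show ?thesis
      by (simp add: M v cusp_of_def)
  qed
qed

lemma mact_mult_cusp_of:
  assumes "mat2_det N = 1" "v \<noteq> (0,0)"
  shows "mact (mat2_mult M N) (cusp_of v) = mact M (mact N (cusp_of v))"
  using assms mat2_vec_nonzero[of N v]
  by (simp add: mact_cusp_of mat2_vec_mult)

lemma mact_mult:
  assumes "M \<in> carrier SL2Z" "N \<in> carrier SL2Z" "z \<in> Hbar"
  shows "mact (M \<otimes>\<^bsub>SL2Z\<^esub> N) z = mact M (mact N z)"
proof -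
  have N: "mat2_det N = 1" using assms(2) by (simp add: SL2Z_simps)
  show ?thesis
  proof (cases z)
    case (Hpt w)
    with assms(3) have "Im w > 0" by (auto simp: Hbar_def)
    with Hpt show ?thesis by (simp add: SL2Z_simps mact_mult_Hpt[OF N])
  next
    case (Cusp q)
    then show ?thesis
      using mact_mult_cusp_of[OF N, of "(q,1)" M] by (simp add: SL2Z_simps cusp_of_def)
  next
    case Infty
    then show ?thesis
      using mact_mult_cusp_of[OF N, of "(1,0)" M] by (simp add: SL2Z_simps cusp_of_def)
  qed
qed

lemma mact_one: "mact \<one>\<^bsub>SL2Z\<^esub> z = z"
  by (cases z) (auto simp: SL2Z_simps)

lemma mact_inv_cancel:
  assumes "M \<in> carrier SL2Z" "z \<in> Hbar"
  shows "mact M (mact (inv\<^bsub>SL2Z\<^esub> M) z) = z" "mact (inv\<^bsub>SL2Z\<^esub> M) (mact M z) = z"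
  using assms mact_mult[of M "inv\<^bsub>SL2Z\<^esub> M" z] mact_mult[of "inv\<^bsub>SL2Z\<^esub> M" M z]
  by (simp_all add: mact_one)

lemma mact_Cusp_in_Hbar [simp]: "Cusp q \<in> Hbar" "mact M (Cusp q) \<in> Hbar"
  by (cases M; simp add: Hbar_def)+

lemma generators_in_SL2Z [simp]: "matA \<in> carrier SL2Z" "matB \<in> carrier SL2Z" "negI \<in> carrier SL2Z"
  by (simp_all add: matA_def matB_def negI_def SL2Z_simps)

lemma subgroup_Gamma2: "subgroup Gamma2 SL2Z"
  unfolding Gamma2_def by (rule SL2Z.generate_is_subgroup) simp

lemma generators_in_Gamma2 [simp]: "matA \<in> Gamma2" "matB \<in> Gamma2" "negI \<in> Gamma2"
  unfolding Gamma2_def by (auto intro: generate.incl)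

lemma Gamma2_in_SL2Z: "M \<in> Gamma2 \<Longrightarrow> M \<in> carrier SL2Z"
  using subgroup.subset[OF subgroup_Gamma2] by blast

lemma Phi_generators_in_Gamma2:
  fixes n :: nat
  shows "{matA [^]\<^bsub>SL2Z\<^esub> n, matB [^]\<^bsub>SL2Z\<^esub> n, negI} \<union> derived SL2Z Gamma2 \<subseteq> Gamma2"
  using SL2Z.subgroup_int_pow_closed[OF subgroup_Gamma2, of _ "int n"]
    SL2Z.derived_incl[OF order_refl subgroup_Gamma2]
  by (auto simp: int_pow_int)

lemma subgroup_Phi: "subgroup (Phi n) SL2Z"
  unfolding Phi_def
  using Phi_generators_in_Gamma2 Gamma2_in_SL2Z by (intro SL2Z.generate_is_subgroup) blast

lemma Phi_subset_Gamma2: "Phi n \<subseteq> Gamma2"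
  unfolding Phi_def by (rule SL2Z.generate_subgroup_incl[OF Phi_generators_in_Gamma2 subgroup_Gamma2])

lemma Phi_in_SL2Z: "g \<in> Phi n \<Longrightarrow> g \<in> carrier SL2Z"
  using subgroup.subset[OF subgroup_Phi] by blast

lemma Gamma2_commutator_in_Phi:
  assumes "x \<in> Gamma2" "y \<in> Gamma2"
  shows "x \<otimes>\<^bsub>SL2Z\<^esub> y \<otimes>\<^bsub>SL2Z\<^esub> inv\<^bsub>SL2Z\<^esub> x \<otimes>\<^bsub>SL2Z\<^esub> inv\<^bsub>SL2Z\<^esub> y \<in> Phi n"
proof -
  have "x \<otimes>\<^bsub>SL2Z\<^esub> y \<otimes>\<^bsub>SL2Z\<^esub> inv\<^bsub>SL2Z\<^esub> x \<otimes>\<^bsub>SL2Z\<^esub> inv\<^bsub>SL2Z\<^esub> y \<in> derived SL2Z Gamma2"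
    unfolding derived_def using assms by (intro generate.incl) blast
  then show ?thesis unfolding Phi_def by (intro generate.incl) blast
qed

lemma Gamma2_conj_Phi:
  assumes "M \<in> Gamma2" "g \<in> Phi n"
  shows "M \<otimes>\<^bsub>SL2Z\<^esub> g \<otimes>\<^bsub>SL2Z\<^esub> inv\<^bsub>SL2Z\<^esub> M \<in> Phi n"
proof -
  have M: "M \<in> carrier SL2Z" and g: "g \<in> carrier SL2Z"
    using assms Gamma2_in_SL2Z Phi_in_SL2Z by auto
  have "M \<otimes>\<^bsub>SL2Z\<^esub> g \<otimes>\<^bsub>SL2Z\<^esub> inv\<^bsub>SL2Z\<^esub> M
      = (M \<otimes>\<^bsub>SL2Z\<^esub> g \<otimes>\<^bsub>SL2Z\<^esub> inv\<^bsub>SL2Z\<^esub> M \<otimes>\<^bsub>SL2Z\<^esub> inv\<^bsub>SL2Z\<^esub> g) \<otimes>\<^bsub>SL2Z\<^esub> g"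
    using M g by (simp add: SL2Z.m_assoc)
  also have "\<dots> \<in> Phi n"
    using assms Phi_subset_Gamma2 Gamma2_commutator_in_Phi
    by (blast intro: subgroup.m_closed[OF subgroup_Phi])
  finally show ?thesis .
qed

lemma mem_piPhi_self: "w \<in> piPhi n w"
  using subgroup.one_closed[OF subgroup_Phi] by (force simp: piPhi_def mact_one)

lemma piPhi_mact_subset:
  assumes "g \<in> Phi n" "w \<in> Hbar"
  shows "piPhi n (mact g w) \<subseteq> piPhi n w"
proof
  fix u assume "u \<in> piPhi n (mact g w)"
  then obtain h where "h \<in> Phi n" "u = mact h (mact g w)" by (auto simp: piPhi_def)
  with assms have "h \<otimes>\<^bsub>SL2Z\<^esub> g \<in> Phi n" "u = mact (h \<otimes>\<^bsub>SL2Z\<^esub> g) w"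
    by (simp_all add: subgroup.m_closed[OF subgroup_Phi] mact_mult Phi_in_SL2Z)
  then show "u \<in> piPhi n w" by (auto simp: piPhi_def)
qed

lemma piPhi_mact_Phi:
  assumes "g \<in> Phi n" "w \<in> Hbar"
  shows "piPhi n (mact g w) = piPhi n w"
proof
  show "piPhi n (mact g w) \<subseteq> piPhi n w" using assms by (rule piPhi_mact_subset)
  have g: "g \<in> carrier SL2Z" using assms(1) by (rule Phi_in_SL2Z)
  have "w = mact (inv\<^bsub>SL2Z\<^esub> g) (mact g w)"
    using g assms(2) by (simp add: mact_inv_cancel)
  then show "piPhi n w \<subseteq> piPhi n (mact g w)"
    using piPhi_mact_subset[of "inv\<^bsub>SL2Z\<^esub> g" n "mact g w"] assms g
    by (simp add: subgroup.m_inv_closed[OF subgroup_Phi] mact_in_Hbar)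
qed

lemma piPhi_mact_cong:
  assumes "M \<in> Gamma2" "w' \<in> Hbar" "piPhi n w = piPhi n w'"
  shows "piPhi n (mact M w) = piPhi n (mact M w')"
proof -
  have "w \<in> piPhi n w'"
    using mem_piPhi_self[of w n] assms(3) by simp
  then obtain g where g: "g \<in> Phi n" "w = mact g w'" by (auto simp: piPhi_def)
  have M: "M \<in> carrier SL2Z" and "g \<in> carrier SL2Z"
    using assms(1) g(1) Gamma2_in_SL2Z Phi_in_SL2Z by auto
  then have "mact (M \<otimes>\<^bsub>SL2Z\<^esub> g \<otimes>\<^bsub>SL2Z\<^esub> inv\<^bsub>SL2Z\<^esub> M) (mact M w')
      = mact M (mact g (mact (inv\<^bsub>SL2Z\<^esub> M) (mact M w')))"
    using assms(2) by (simp add: mact_mult mact_in_Hbar)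
  also have "\<dots> = mact M w"
    using M assms(2) g(2) by (simp add: mact_inv_cancel)
  finally have "mact M w = mact (M \<otimes>\<^bsub>SL2Z\<^esub> g \<otimes>\<^bsub>SL2Z\<^esub> inv\<^bsub>SL2Z\<^esub> M) (mact M w')" ..
  then show ?thesis
    using Gamma2_conj_Phi[OF assms(1) g(1)] M assms(2)
    by (simp add: piPhi_mact_Phi mact_in_Hbar)
qed

lemma piPhi_mact_commute:
  assumes "x \<in> Gamma2" "y \<in> Gamma2" "w \<in> Hbar"
  shows "piPhi n (mact x (mact y w)) = piPhi n (mact y (mact x w))"
proof -
  have x: "x \<in> carrier SL2Z" and y: "y \<in> carrier SL2Z"
    using assms Gamma2_in_SL2Z by auto
  let ?c = "x \<otimes>\<^bsub>SL2Z\<^esub> y \<otimes>\<^bsub>SL2Z\<^esub> inv\<^bsub>SL2Z\<^esub> x \<otimes>\<^bsub>SL2Z\<^esub> inv\<^bsub>SL2Z\<^esub> y"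
  have c: "?c \<in> carrier SL2Z"
    using x y by simp
  have "mact x (mact y w) = mact (?c \<otimes>\<^bsub>SL2Z\<^esub> (y \<otimes>\<^bsub>SL2Z\<^esub> x)) w"
    using x y assms(3) by (simp add: SL2Z.commutator_mult_swap mact_mult)
  also have "\<dots> = mact ?c (mact y (mact x w))"
    using c x y assms(3) by (simp only: mact_mult SL2Z.m_closed)
  finally have "piPhi n (mact x (mact y w)) = piPhi n (mact ?c (mact y (mact x w)))"
    by simp
  also have "\<dots> = piPhi n (mact y (mact x w))"
    using x y assms(3)
    by (intro piPhi_mact_Phi Gamma2_commutator_in_Phi assms(1,2) mact_in_Hbar)
  finally show ?thesis .
qed

lemma piPhi_mact_mult_swap:
  assumes x: "x \<in> Gamma2" and y: "y \<in> Gamma2" and u: "u \<in> Gamma2" and v: "v \<in> Gamma2"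
    and p: "p \<in> Hbar"
    and xy: "piPhi n (mact x p) = piPhi n (mact y p)"
    and uv: "piPhi n (mact u p) = piPhi n (mact v p)"
  shows "piPhi n (mact (x \<otimes>\<^bsub>SL2Z\<^esub> u) p) = piPhi n (mact (v \<otimes>\<^bsub>SL2Z\<^esub> y) p)"
proof -
  have in_Hbar: "mact g p \<in> Hbar" if "g \<in> Gamma2" for g
    using that p Gamma2_in_SL2Z mact_in_Hbar by blast
  have "piPhi n (mact (x \<otimes>\<^bsub>SL2Z\<^esub> u) p) = piPhi n (mact x (mact u p))"
    using mact_mult[OF Gamma2_in_SL2Z[OF x] Gamma2_in_SL2Z[OF u] p] by simp
  also have "\<dots> = piPhi n (mact x (mact v p))"
    using x in_Hbar[OF v] uv by (rule piPhi_mact_cong)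
  also have "\<dots> = piPhi n (mact v (mact x p))"
    using x v p by (rule piPhi_mact_commute)
  also have "\<dots> = piPhi n (mact v (mact y p))"
    using v in_Hbar[OF y] xy by (rule piPhi_mact_cong)
  also have "\<dots> = piPhi n (mact (v \<otimes>\<^bsub>SL2Z\<^esub> y) p)"
    using mact_mult[OF Gamma2_in_SL2Z[OF v] Gamma2_in_SL2Z[OF y] p] by simp
  finally show ?thesis .
qed

lemma inv_matA_matB_Cusp_one:
  "mact (inv\<^bsub>SL2Z\<^esub> matA) (Cusp 1) = mact (inv\<^bsub>SL2Z\<^esub> matB) (Cusp 1)"
  by (simp add: matA_def matB_def SL2Z_inv)

lemma inv_generators_in_Gamma2 [simp]: "inv\<^bsub>SL2Z\<^esub> matA \<in> Gamma2" "inv\<^bsub>SL2Z\<^esub> matB \<in> Gamma2"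
  by (simp_all add: subgroup.m_inv_closed[OF subgroup_Gamma2])

lemma int_pow_in_Gamma2 [simp]: "x \<in> Gamma2 \<Longrightarrow> x [^]\<^bsub>SL2Z\<^esub> (k::int) \<in> Gamma2"
  by (rule SL2Z.subgroup_int_pow_closed[OF subgroup_Gamma2])

lemma piPhi_matA_matB_Cusp_one:
  "piPhi n (mact matA (Cusp 1)) = piPhi n (mact matB (Cusp 1))"
proof -
  let ?p = "mact (inv\<^bsub>SL2Z\<^esub> matA) (Cusp 1)"
  have "mact matA (Cusp 1) = mact matA (mact matB ?p)"
    by (simp add: inv_matA_matB_Cusp_one mact_inv_cancel)
  moreover have "mact matB (Cusp 1) = mact matB (mact matA ?p)"
    by (simp add: mact_inv_cancel)
  ultimately show ?thesis
    by (simp add: piPhi_mact_commute)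
qed

lemma piPhi_int_pow_Cusp_one:
  fixes k :: int
  shows "piPhi n (mact (matA [^]\<^bsub>SL2Z\<^esub> k) (Cusp 1)) = piPhi n (mact (matB [^]\<^bsub>SL2Z\<^esub> k) (Cusp 1))"
proof (induction k rule: int_induct[where k = 0])
  case base
  then show ?case by (simp add: mact_one)
next
  case (step1 k)
  have "matA [^]\<^bsub>SL2Z\<^esub> (k + 1) = matA \<otimes>\<^bsub>SL2Z\<^esub> matA [^]\<^bsub>SL2Z\<^esub> k"
    "matB [^]\<^bsub>SL2Z\<^esub> (k + 1) = matB [^]\<^bsub>SL2Z\<^esub> k \<otimes>\<^bsub>SL2Z\<^esub> matB"
    using SL2Z.int_pow_mult[of matA 1 k] SL2Z.int_pow_mult[of matB k 1] by (simp_all add: add.commute)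
  then show ?case
    using piPhi_mact_mult_swap[OF _ _ _ _ _ piPhi_matA_matB_Cusp_one step1(2)] by simp
next
  case (step2 k)
  have "matA [^]\<^bsub>SL2Z\<^esub> (k - 1) = inv\<^bsub>SL2Z\<^esub> matA \<otimes>\<^bsub>SL2Z\<^esub> matA [^]\<^bsub>SL2Z\<^esub> k"
    "matB [^]\<^bsub>SL2Z\<^esub> (k - 1) = matB [^]\<^bsub>SL2Z\<^esub> k \<otimes>\<^bsub>SL2Z\<^esub> inv\<^bsub>SL2Z\<^esub> matB"
    using SL2Z.int_pow_mult[of matA "-1" k] SL2Z.int_pow_mult[of matB k "-1"]
    by (simp_all add: SL2Z.int_pow_neg)
  then show ?case
    using piPhi_mact_mult_swap[OF _ _ _ _ _ _ step2(2)] inv_matA_matB_Cusp_one by simp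
qed

theorem lemma3p1:
  fixes n :: nat
  assumes "n \<ge> 1"
  shows "(\<forall>z \<in> Hbar. piPhi n (mact matA (mact matB z)) = piPhi n (mact matB (mact matA z)))
       \<and> (\<forall>k :: int. piPhi n (mact (matA [^]\<^bsub>SL2Z\<^esub> k) (Cusp 1))
                     = piPhi n (mact (matB [^]\<^bsub>SL2Z\<^esub> k) (Cusp 1)))"
  by (simp add: piPhi_mact_commute piPhi_int_pow_Cusp_one)

end
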